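(* Let $k$ be a commutative ring, $A$ an associative $k$-algebra and $Q=\sum_ix_i\otimes y_i\in C_{A\otimes_kA}(A)$. Define $\mathrm{R}=Q\tau\in\operatorname{End}_k(A\otimes_kA)$, i.e. $\mathrm{R}(a\otimes b)=Q\cdot(b\otimes a)=\sum_i x_ib\otimes y_ia$, where $\tau$ is the twist map. Then $\mathrm{R}$ is a solution of the quantum Yang–Baxter equation $$\mathrm{R}^{12}\circ\mathrm{R}^{13}\circ\mathrm{R}^{23}=\mathrm{R}^{23}\circ\mathrm{R}^{13}\circ\mathrm{R}^{12}.$$
   Context: $C_{A\otimes_kA}(A)=\{\sum_i x_i\otimes y_i\in A\otimes_kA:\ \sum_i ax_i\otimes y_i=\sum_i x_i\otimes y_ia\ \text{for all }a\in A\}$. For $\mathrm{R}\in\operatorname{End}_k(A\otimes_kA)$: $\mathrm{R}^{12}=\mathrm{R}\otimes\operatorname{Id}$, $\mathrm{R}^{23}=\operatorname{Id}\otimes\mathrm{R}$, $\mathrm{R}^{13}=(\operatorname{Id}\otimes\tau)(\mathrm{R}\otimes\operatorname{Id})(\operatorname{Id}\otimes\tau)$ in $\operatorname{End}_k(A\otimes_kA\otimes_kA)$, where $\tau(a\otimes b)=b\otimes a$. *)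

theory Defs
  imports Main HOL.Modules "HOL-Library.Function_Algebras"
begin

text \<open>
  Tensor products over a commutative ring k are modelled concretely:
  the free k-module on a set X is the type X => k restricted to finitely
  supported functions; A (x)_k A is the free module on A x A modulo the
  k-submodule generated by the bilinearity relations, and similarly for
  A (x)_k A (x)_k A on A x A x A.  Equality in the tensor product is thus
  "difference lies in the relation submodule".
\<close>

definition fsupp :: "('b \<Rightarrow> 'k::zero) \<Rightarrow> bool" where
  "fsupp f \<longleftrightarrow> finite {x. f x \<noteq> 0}"

definition delta :: "'b \<Rightarrow> 'b \<Rightarrow> 'k::zero_neq_one" where
  "delta x = (\<lambda>y. if y = x then 1 else 0)"

definition fscale :: "'k::times \<Rightarrow> ('b \<Rightarrow> 'k) \<Rightarrow> 'b \<Rightarrow> 'k" where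
  "fscale c u = (\<lambda>y. c * u y)"

definition lin_ext :: "('b \<Rightarrow> 'c \<Rightarrow> 'k::comm_ring_1) \<Rightarrow> ('b \<Rightarrow> 'k) \<Rightarrow> 'c \<Rightarrow> 'k" where
  "lin_ext g f = (\<Sum>x\<in>{x. f x \<noteq> 0}. fscale (f x) (g x))"

inductive_set tensor2_rel :: "('k::comm_ring_1 \<Rightarrow> 'a::ab_group_add \<Rightarrow> 'a) \<Rightarrow> ('a \<times> 'a \<Rightarrow> 'k) set"
  for sm where
  zero: "0 \<in> tensor2_rel sm"
| add: "u \<in> tensor2_rel sm \<Longrightarrow> v \<in> tensor2_rel sm \<Longrightarrow> u + v \<in> tensor2_rel sm"
| scale: "u \<in> tensor2_rel sm \<Longrightarrow> fscale c u \<in> tensor2_rel sm"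
| addL: "delta (a + a', b) - delta (a, b) - delta (a', b) \<in> tensor2_rel sm"
| addR: "delta (a, b + b') - delta (a, b) - delta (a, b') \<in> tensor2_rel sm"
| smulL: "delta (sm c a, b) - fscale c (delta (a, b)) \<in> tensor2_rel sm"
| smulR: "delta (a, sm c b) - fscale c (delta (a, b)) \<in> tensor2_rel sm"

inductive_set tensor3_rel :: "('k::comm_ring_1 \<Rightarrow> 'a::ab_group_add \<Rightarrow> 'a) \<Rightarrow> ('a \<times> 'a \<times> 'a \<Rightarrow> 'k) set"
  for sm where
  zero: "0 \<in> tensor3_rel sm"
| add: "u \<in> tensor3_rel sm \<Longrightarrow> v \<in> tensor3_rel sm \<Longrightarrow> u + v \<in> tensor3_rel sm"
| scale: "u \<in> tensor3_rel sm \<Longrightarrow> fscale c u \<in> tensor3_rel sm"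
| add1: "delta (a + a', b, d) - delta (a, b, d) - delta (a', b, d) \<in> tensor3_rel sm"
| add2: "delta (a, b + b', d) - delta (a, b, d) - delta (a, b', d) \<in> tensor3_rel sm"
| add3: "delta (a, b, d + d') - delta (a, b, d) - delta (a, b, d') \<in> tensor3_rel sm"
| smul1: "delta (sm c a, b, d) - fscale c (delta (a, b, d)) \<in> tensor3_rel sm"
| smul2: "delta (a, sm c b, d) - fscale c (delta (a, b, d)) \<in> tensor3_rel sm"
| smul3: "delta (a, b, sm c d) - fscale c (delta (a, b, d)) \<in> tensor3_rel sm"

definition k_algebra :: "('k::comm_ring_1 \<Rightarrow> 'a::ring \<Rightarrow> 'a) \<Rightarrow> bool" where
  "k_algebra sm \<longleftrightarrow> module sm \<and>
     (\<forall>c a b. sm c (a * b) = sm c a * b) \<and> (\<forall>c a b. sm c (a * b) = a * sm c b)"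

text \<open>the element Q = sum_i x_i (x) y_i, given by the list of pairs (x_i, y_i)\<close>
definition tensor_elt :: "('a \<times> 'a) list \<Rightarrow> 'a \<times> 'a \<Rightarrow> 'k::comm_ring_1" where
  "tensor_elt Q = (\<Sum>(x, y)\<leftarrow>Q. delta (x, y))"

definition in_centralizer :: "('k::comm_ring_1 \<Rightarrow> 'a::ring \<Rightarrow> 'a) \<Rightarrow> ('a \<times> 'a) list \<Rightarrow> bool" where
  "in_centralizer sm Q \<longleftrightarrow>
     (\<forall>a. ((\<Sum>(x, y)\<leftarrow>Q. delta (a * x, y)) - (\<Sum>(x, y)\<leftarrow>Q. delta (x, y * a)) :: 'a \<times> 'a \<Rightarrow> 'k)
           \<in> tensor2_rel sm)"

definition Rmap :: "('a::ring \<times> 'a) list \<Rightarrow> ('a \<times> 'a \<Rightarrow> 'k::comm_ring_1) \<Rightarrow> 'a \<times> 'a \<Rightarrow> 'k" where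
  "Rmap Q = lin_ext (\<lambda>(a, b). (\<Sum>(x, y)\<leftarrow>Q. delta (x * b, y * a)))"

definition tau2 :: "('a \<times> 'a \<Rightarrow> 'k::comm_ring_1) \<Rightarrow> 'a \<times> 'a \<Rightarrow> 'k" where
  "tau2 = lin_ext (\<lambda>(a, b). delta (b, a))"

definition tensor_id_right :: "(('a \<times> 'a \<Rightarrow> 'k::comm_ring_1) \<Rightarrow> 'a \<times> 'a \<Rightarrow> 'k)
    \<Rightarrow> ('a \<times> 'a \<times> 'a \<Rightarrow> 'k) \<Rightarrow> 'a \<times> 'a \<times> 'a \<Rightarrow> 'k" where
  "tensor_id_right T = lin_ext (\<lambda>(a, b, c). lin_ext (\<lambda>(u, v). delta (u, v, c)) (T (delta (a, b))))"

definition tensor_id_left :: "(('a \<times> 'a \<Rightarrow> 'k::comm_ring_1) \<Rightarrow> 'a \<times> 'a \<Rightarrow> 'k)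
    \<Rightarrow> ('a \<times> 'a \<times> 'a \<Rightarrow> 'k) \<Rightarrow> 'a \<times> 'a \<times> 'a \<Rightarrow> 'k" where
  "tensor_id_left T = lin_ext (\<lambda>(a, b, c). lin_ext (\<lambda>(v, w). delta (a, v, w)) (T (delta (b, c))))"

definition R12 :: "(('a \<times> 'a \<Rightarrow> 'k::comm_ring_1) \<Rightarrow> 'a \<times> 'a \<Rightarrow> 'k)
    \<Rightarrow> ('a \<times> 'a \<times> 'a \<Rightarrow> 'k) \<Rightarrow> 'a \<times> 'a \<times> 'a \<Rightarrow> 'k" where
  "R12 R = tensor_id_right R"

definition R23 :: "(('a \<times> 'a \<Rightarrow> 'k::comm_ring_1) \<Rightarrow> 'a \<times> 'a \<Rightarrow> 'k)
    \<Rightarrow> ('a \<times> 'a \<times> 'a \<Rightarrow> 'k) \<Rightarrow> 'a \<times> 'a \<times> 'a \<Rightarrow> 'k" where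
  "R23 R = tensor_id_left R"

definition R13 :: "(('a \<times> 'a \<Rightarrow> 'k::comm_ring_1) \<Rightarrow> 'a \<times> 'a \<Rightarrow> 'k)
    \<Rightarrow> ('a \<times> 'a \<times> 'a \<Rightarrow> 'k) \<Rightarrow> 'a \<times> 'a \<times> 'a \<Rightarrow> 'k" where
  "R13 R = tensor_id_left tau2 \<circ> tensor_id_right R \<circ> tensor_id_left tau2"

end

theory Submission
  imports Defs
begin

text \<open>
  On a basis tensor \<open>a \<otimes> b \<otimes> c\<close> the left-hand side of the Yang-Baxter equation equals
  \<open>\<Sum>\<^sub>i\<^sub>j\<^sub>k x\<^sub>k x\<^sub>i c \<otimes> y\<^sub>k x\<^sub>j y\<^sub>i b \<otimes> y\<^sub>j a\<close> and the right-hand side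
  \<open>\<Sum>\<^sub>i\<^sub>j\<^sub>k x\<^sub>i c \<otimes> x\<^sub>j y\<^sub>i x\<^sub>k b \<otimes> y\<^sub>j y\<^sub>k a\<close>.
  Two applications of the centralizer property of \<open>Q\<close> transform one into the other:
  \<open>\<Sum>\<^sub>j y\<^sub>k x\<^sub>j \<otimes> y\<^sub>j = \<Sum>\<^sub>j x\<^sub>j \<otimes> y\<^sub>j y\<^sub>k\<close>, pushed into the second and third factors,
  moves \<open>y\<^sub>k\<close> to the third factor, and then \<open>\<Sum>\<^sub>i x\<^sub>k x\<^sub>i \<otimes> y\<^sub>i = \<Sum>\<^sub>i x\<^sub>i \<otimes> y\<^sub>i x\<^sub>k\<close>,
  pushed into the first and second factors, moves \<open>x\<^sub>k\<close> to the second factor.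
  Pushing a relation of \<open>A \<otimes> A\<close> into two factors of \<open>A \<otimes> A \<otimes> A\<close> along \<open>k\<close>-linear
  maps yields a relation there, and both sides of the equation are linear, so the
  identity on basis tensors suffices.
\<close>

declare plus_fun_apply [simp del] zero_fun_apply [simp del] minus_apply [simp del]
  uminus_apply [simp del]

lemmas fun_arith_apply = plus_fun_apply zero_fun_apply minus_apply uminus_apply

lemma fscale_apply: "fscale c u y = c * u y"
  by (simp add: fscale_def)

lemma sum_fun_apply: "(\<Sum>x\<in>S. (f x :: 'b \<Rightarrow> 'k::comm_monoid_add)) y = (\<Sum>x\<in>S. f x y)"
  by (induction S rule: infinite_finite_induct) (auto simp: fun_arith_apply)

lemma sum_list_case_prod_conv_sum_nth:
  "(\<Sum>(x, y)\<leftarrow>xs. f x y) = (\<Sum>i<length xs. f (fst (xs ! i)) (snd (xs ! i)))"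
  by (simp add: sum_list_sum_nth atLeast0LessThan case_prod_beta)

subsection \<open>Finitely supported functions\<close>

lemma fsupp_zero [simp]: "fsupp (0 :: 'b \<Rightarrow> 'k::zero)"
  by (simp add: fsupp_def fun_arith_apply)

lemma fsupp_add [simp]: "fsupp u \<Longrightarrow> fsupp v \<Longrightarrow> fsupp (u + (v :: 'b \<Rightarrow> 'k::monoid_add))"
  unfolding fsupp_def
  by (rule finite_subset[of _ "{x. u x \<noteq> 0} \<union> {x. v x \<noteq> 0}"]) (auto simp: fun_arith_apply)

lemma fsupp_diff [simp]: "fsupp u \<Longrightarrow> fsupp v \<Longrightarrow> fsupp (u - (v :: 'b \<Rightarrow> 'k::group_add))"
  unfolding fsupp_def
  by (rule finite_subset[of _ "{x. u x \<noteq> 0} \<union> {x. v x \<noteq> 0}"]) (auto simp: fun_arith_apply)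

lemma fsupp_fscale [simp]: "fsupp u \<Longrightarrow> fsupp (fscale c (u :: 'b \<Rightarrow> 'k::comm_ring_1))"
  unfolding fsupp_def
  by (rule finite_subset[of _ "{x. u x \<noteq> 0}"]) (auto simp: fscale_apply)

lemma fsupp_delta [simp]: "fsupp (delta x :: 'b \<Rightarrow> 'k::zero_neq_one)"
  unfolding fsupp_def delta_def
  by (rule finite_subset[of _ "{x}"]) auto

lemma fsupp_sum [simp]:
  "(\<And>i. i \<in> I \<Longrightarrow> fsupp (u i)) \<Longrightarrow> fsupp (\<Sum>i\<in>I. (u i :: 'b \<Rightarrow> 'k::comm_ring_1))"
  by (induction I rule: infinite_finite_induct) auto

lemma fscale_zero_left [simp]: "fscale 0 u = (0 :: 'b \<Rightarrow> 'k::comm_ring_1)"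
  by (simp add: fscale_def zero_fun_def)

lemma fscale_one [simp]: "fscale 1 u = (u :: 'b \<Rightarrow> 'k::comm_ring_1)"
  by (simp add: fscale_def)

lemma fscale_zero_right [simp]: "fscale c (0 :: 'b \<Rightarrow> 'k::comm_ring_1) = 0"
  by (simp add: fscale_def zero_fun_def)

lemma fscale_add_left: "fscale (a + b) u = fscale a u + fscale b (u :: 'b \<Rightarrow> 'k::comm_ring_1)"
  by (rule ext) (simp add: algebra_simps fscale_apply fun_arith_apply)

lemma fscale_add_right: "fscale a (u + v) = fscale a u + fscale a (v :: 'b \<Rightarrow> 'k::comm_ring_1)"
  by (rule ext) (simp add: algebra_simps fscale_apply fun_arith_apply)

lemma fscale_diff_right: "fscale a (u - v) = fscale a u - fscale a (v :: 'b \<Rightarrow> 'k::comm_ring_1)"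
  by (rule ext) (simp add: algebra_simps fscale_apply fun_arith_apply)

lemma fscale_fscale: "fscale c (fscale d u) = fscale (c * d) (u :: 'b \<Rightarrow> 'k::comm_ring_1)"
  by (rule ext) (simp add: algebra_simps fscale_apply)

lemma fscale_sum: "fscale c (\<Sum>i\<in>I. u i) = (\<Sum>i\<in>I. fscale c (u i :: 'b \<Rightarrow> 'k::comm_ring_1))"
  by (induction I rule: infinite_finite_induct) (simp_all add: fscale_add_right)

subsection \<open>Linear extension\<close>

lemma lin_ext_eq_sum:
  assumes "finite S" "{x. f x \<noteq> 0} \<subseteq> S"
  shows "lin_ext g f = (\<Sum>x\<in>S. fscale (f x) (g x))"
  unfolding lin_ext_def
  by (rule sum.mono_neutral_left) (use assms in auto)

lemma lin_ext_add:
  assumes "fsupp u" "fsupp v"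
  shows "lin_ext g (u + v) = lin_ext g u + lin_ext g v"
proof -
  let ?S = "{x. u x \<noteq> 0} \<union> {x. v x \<noteq> 0}"
  have S: "finite ?S" using assms by (simp add: fsupp_def)
  have "lin_ext g (u + v) = (\<Sum>x\<in>?S. fscale ((u + v) x) (g x))"
    by (rule lin_ext_eq_sum[OF S]) (auto simp: fun_arith_apply)
  also have "\<dots> = (\<Sum>x\<in>?S. fscale (u x) (g x)) + (\<Sum>x\<in>?S. fscale (v x) (g x))"
    by (simp add: fscale_add_left sum.distrib fun_arith_apply)
  also have "\<dots> = lin_ext g u + lin_ext g v"
    by (simp add: lin_ext_eq_sum[OF S])
  finally show ?thesis .
qed

lemma lin_ext_fscale:
  assumes "fsupp u"
  shows "lin_ext g (fscale c u) = fscale c (lin_ext g u)"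
proof -
  let ?S = "{x. u x \<noteq> 0}"
  have S: "finite ?S" using assms by (simp add: fsupp_def)
  have "lin_ext g (fscale c u) = (\<Sum>x\<in>?S. fscale (fscale c u x) (g x))"
    by (rule lin_ext_eq_sum[OF S]) (auto simp: fscale_apply)
  also have "\<dots> = fscale c (lin_ext g u)"
    by (simp add: lin_ext_eq_sum[OF S] fscale_sum fscale_fscale fscale_apply)
  finally show ?thesis .
qed

lemma lin_ext_zero [simp]: "lin_ext g 0 = 0"
  by (simp add: lin_ext_def fun_arith_apply)

lemma lin_ext_diff:
  assumes "fsupp u" "fsupp v"
  shows "lin_ext g (u - v) = lin_ext g u - lin_ext g v"
  using lin_ext_add[of "u - v" v g] assms by (simp add: algebra_simps)

lemma lin_ext_delta [simp]: "lin_ext g (delta x) = g x"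
proof -
  have "lin_ext g (delta x) = (\<Sum>y\<in>{x}. fscale (delta x y) (g y))"
    by (rule lin_ext_eq_sum) (auto simp: delta_def)
  then show ?thesis by (simp add: delta_def)
qed

lemma lin_ext_sum:
  "(\<And>i. i \<in> I \<Longrightarrow> fsupp (u i)) \<Longrightarrow> lin_ext g (\<Sum>i\<in>I. u i) = (\<Sum>i\<in>I. lin_ext g (u i))"
  by (induction I rule: infinite_finite_induct) (auto simp: lin_ext_add)

lemma lin_ext_fun_diff: "lin_ext (\<lambda>x. g x - h x) f = lin_ext g f - lin_ext h f"
  unfolding lin_ext_def by (simp add: fscale_diff_right sum_subtractf)

lemma fsupp_lin_ext: "(\<And>x. fsupp (g x)) \<Longrightarrow> fsupp (lin_ext g f)"
  unfolding lin_ext_def by simp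

lemma lin_ext_delta_eq:
  assumes "fsupp f"
  shows "lin_ext delta f = f"
proof
  fix y
  have "lin_ext delta f y = (\<Sum>x\<in>{x. f x \<noteq> 0}. if y = x then f x else 0)"
    by (simp add: lin_ext_def sum_fun_apply fscale_apply delta_def if_distrib cong: if_cong)
  also have "\<dots> = f y"
    using assms by (simp add: sum.delta' fsupp_def)
  finally show "lin_ext delta f y = f y" .
qed

definition free_linear :: "(('b \<Rightarrow> 'k::comm_ring_1) \<Rightarrow> ('c \<Rightarrow> 'k)) \<Rightarrow> bool" where
  "free_linear L \<longleftrightarrow> (\<forall>u v. fsupp u \<longrightarrow> fsupp v \<longrightarrow> L (u + v) = L u + L v) \<and>
     (\<forall>c u. fsupp u \<longrightarrow> L (fscale c u) = fscale c (L u)) \<and> (\<forall>u. fsupp u \<longrightarrow> fsupp (L u))"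

lemma free_linear_lin_ext: "(\<And>x. fsupp (g x)) \<Longrightarrow> free_linear (lin_ext g)"
  unfolding free_linear_def by (simp add: lin_ext_add lin_ext_fscale fsupp_lin_ext)

lemma free_linear_comp: "free_linear L \<Longrightarrow> free_linear M \<Longrightarrow> free_linear (L \<circ> M)"
  unfolding free_linear_def by simp

lemma free_linear_zero: "free_linear L \<Longrightarrow> L 0 = 0"
  unfolding free_linear_def by (metis add.right_neutral add_left_imp_eq fsupp_zero)

lemma free_linear_sum:
  "free_linear L \<Longrightarrow> (\<And>i. i \<in> I \<Longrightarrow> fsupp (u i)) \<Longrightarrow> L (\<Sum>i\<in>I. u i) = (\<Sum>i\<in>I. L (u i))"
proof (induction I rule: infinite_finite_induct)
  case (insert x F)
  then show ?case unfolding free_linear_def by simp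
qed (simp_all add: free_linear_zero)

lemma free_linear_lin_ext_comm:
  assumes "free_linear L" "\<And>x. fsupp (g x)"
  shows "L (lin_ext g f) = lin_ext (\<lambda>x. L (g x)) f"
  unfolding lin_ext_def using assms by (simp add: free_linear_sum free_linear_def)

lemma free_linear_tensor_id_right: "free_linear (tensor_id_right T)"
  unfolding tensor_id_right_def
  by (rule free_linear_lin_ext) (simp add: case_prod_beta fsupp_lin_ext)

lemma free_linear_tensor_id_left: "free_linear (tensor_id_left T)"
  unfolding tensor_id_left_def
  by (rule free_linear_lin_ext) (simp add: case_prod_beta fsupp_lin_ext)

lemma free_linear_R12: "free_linear (R12 T)"
  unfolding R12_def by (rule free_linear_tensor_id_right)

lemma free_linear_R23: "free_linear (R23 T)"
  unfolding R23_def by (rule free_linear_tensor_id_left)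

lemma free_linear_R13: "free_linear (R13 T)"
  unfolding R13_def
  by (intro free_linear_comp free_linear_tensor_id_left free_linear_tensor_id_right)

subsection \<open>The relation submodules\<close>

lemma tensor2_rel_fsupp: "u \<in> tensor2_rel sm \<Longrightarrow> fsupp u"
  by (induction rule: tensor2_rel.induct) auto

lemma tensor3_rel_trans:
  "u - v \<in> tensor3_rel sm \<Longrightarrow> v - w \<in> tensor3_rel sm \<Longrightarrow> u - w \<in> tensor3_rel sm"
  using tensor3_rel.add[of "u - v" sm "v - w"] by simp

lemma tensor3_rel_sum: "(\<And>i. i \<in> I \<Longrightarrow> u i \<in> tensor3_rel sm) \<Longrightarrow> (\<Sum>i\<in>I. u i) \<in> tensor3_rel sm"
  by (induction I rule: infinite_finite_induct) (auto intro: tensor3_rel.intros)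

lemma tensor3_rel_sum_diff:
  "(\<And>i. i \<in> I \<Longrightarrow> u i - v i \<in> tensor3_rel sm) \<Longrightarrow> (\<Sum>i\<in>I. u i) - (\<Sum>i\<in>I. v i) \<in> tensor3_rel sm"
  by (simp add: sum_subtractf[symmetric] tensor3_rel_sum)

lemma tensor3_rel_lin_ext: "(\<And>x. g x \<in> tensor3_rel sm) \<Longrightarrow> lin_ext g f \<in> tensor3_rel sm"
  unfolding lin_ext_def by (intro tensor3_rel_sum tensor3_rel.scale)

lemma free_linear_diff_in_tensor3_rel:
  assumes "free_linear L" "free_linear M" "fsupp f"
    and "\<And>x. L (delta x) - M (delta x) \<in> tensor3_rel sm"
  shows "L f - M f \<in> tensor3_rel sm"
proof -
  have "L f - M f = L (lin_ext delta f) - M (lin_ext delta f)"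
    by (simp only: lin_ext_delta_eq[OF \<open>fsupp f\<close>])
  also have "\<dots> = lin_ext (\<lambda>x. L (delta x) - M (delta x)) f"
    by (simp only: free_linear_lin_ext_comm[OF assms(1) fsupp_delta]
        free_linear_lin_ext_comm[OF assms(2) fsupp_delta] lin_ext_fun_diff)
  finally show ?thesis
    using assms(4) by (simp add: tensor3_rel_lin_ext)
qed

lemma lin_ext_tensor2_rel:
  assumes add_left: "\<And>p p' q. delta (F (p + p') q) - delta (F p q) - delta (F p' q) \<in> tensor3_rel sm"
    and add_right: "\<And>p q q'. delta (F p (q + q')) - delta (F p q) - delta (F p q') \<in> tensor3_rel sm"
    and scale_left: "\<And>c p q. delta (F (sm c p) q) - fscale c (delta (F p q)) \<in> tensor3_rel sm"
    and scale_right: "\<And>c p q. delta (F p (sm c q)) - fscale c (delta (F p q)) \<in> tensor3_rel sm"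
    and "u \<in> tensor2_rel sm"
  shows "lin_ext (\<lambda>(p, q). delta (F p q)) u \<in> tensor3_rel sm"
  using \<open>u \<in> tensor2_rel sm\<close>
proof (induction rule: tensor2_rel.induct)
  case zero
  then show ?case by (simp add: tensor3_rel.zero)
next
  case (add u v)
  then show ?case by (simp add: lin_ext_add tensor2_rel_fsupp tensor3_rel.add)
next
  case (scale u c)
  then show ?case by (simp add: lin_ext_fscale tensor2_rel_fsupp tensor3_rel.scale)
next
  case (addL a a' b)
  then show ?case using add_left by (simp add: lin_ext_diff)
next
  case (addR a b b')
  then show ?case using add_right by (simp add: lin_ext_diff)
next
  case (smulL c a b)
  then show ?case using scale_left by (simp add: lin_ext_diff lin_ext_fscale)
next
  case (smulR a c b)
  then show ?case using scale_right by (simp add: lin_ext_diff lin_ext_fscale)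
qed

lemma lin_ext_tensor2_rel_into_23:
  assumes "module_hom sm sm f" "module_hom sm sm g" "u \<in> tensor2_rel sm"
  shows "lin_ext (\<lambda>(p, q). delta (a, f p, g q)) u \<in> tensor3_rel sm"
  using assms
  by (intro lin_ext_tensor2_rel[where F = "\<lambda>p q. (a, f p, g q)"])
     (simp_all add: module_hom.add module_hom.scale tensor3_rel.add2 tensor3_rel.add3
       tensor3_rel.smul2 tensor3_rel.smul3)

lemma lin_ext_tensor2_rel_into_12:
  assumes "module_hom sm sm f" "module_hom sm sm g" "u \<in> tensor2_rel sm"
  shows "lin_ext (\<lambda>(p, q). delta (f p, g q, c)) u \<in> tensor3_rel sm"
  using assms
  by (intro lin_ext_tensor2_rel[where F = "\<lambda>p q. (f p, g q, c)"])
     (simp_all add: module_hom.add module_hom.scale tensor3_rel.add1 tensor3_rel.add2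
       tensor3_rel.smul1 tensor3_rel.smul2)

lemma module_hom_mult_right: "k_algebra sm \<Longrightarrow> module_hom sm sm (\<lambda>p. p * m)"
  unfolding k_algebra_def module_hom_iff by (simp add: distrib_right)

lemma module_hom_mult_left: "k_algebra sm \<Longrightarrow> module_hom sm sm (\<lambda>p. m * p)"
  unfolding k_algebra_def module_hom_iff by (simp add: distrib_left) metis

lemma in_centralizerD:
  "in_centralizer sm Q \<Longrightarrow>
    (\<Sum>i<length Q. delta (z * fst (Q ! i), snd (Q ! i)))
      - (\<Sum>i<length Q. delta (fst (Q ! i), snd (Q ! i) * z)) \<in> tensor2_rel sm"
  unfolding in_centralizer_def by (simp add: sum_list_case_prod_conv_sum_nth)

lemma centralizer_into_23:
  assumes "in_centralizer sm Q" "module_hom sm sm f" "module_hom sm sm g"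
  shows "(\<Sum>i<length Q. delta (a, f (z * fst (Q ! i)), g (snd (Q ! i))))
      - (\<Sum>i<length Q. delta (a, f (fst (Q ! i)), g (snd (Q ! i) * z))) \<in> tensor3_rel sm"
  using lin_ext_tensor2_rel_into_23[OF assms(2,3) in_centralizerD[OF assms(1)], of a z]
  by (simp add: lin_ext_diff lin_ext_sum)

lemma centralizer_into_12:
  assumes "in_centralizer sm Q" "module_hom sm sm f" "module_hom sm sm g"
  shows "(\<Sum>i<length Q. delta (f (z * fst (Q ! i)), g (snd (Q ! i)), c))
      - (\<Sum>i<length Q. delta (f (fst (Q ! i)), g (snd (Q ! i) * z), c)) \<in> tensor3_rel sm"
  using lin_ext_tensor2_rel_into_12[OF assms(2,3) in_centralizerD[OF assms(1)], of c z]
  by (simp add: lin_ext_diff lin_ext_sum)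

subsection \<open>The Yang-Baxter equation\<close>

lemma Rmap_delta: "Rmap Q (delta (a, b)) = (\<Sum>i<length Q. delta (fst (Q ! i) * b, snd (Q ! i) * a))"
  by (simp add: Rmap_def sum_list_case_prod_conv_sum_nth)

lemma R12_Rmap_delta:
  "R12 (Rmap Q) (delta (a, b, c)) = (\<Sum>i<length Q. delta (fst (Q ! i) * b, snd (Q ! i) * a, c))"
  by (simp add: R12_def tensor_id_right_def Rmap_delta lin_ext_sum)

lemma R23_Rmap_delta:
  "R23 (Rmap Q) (delta (a, b, c)) = (\<Sum>i<length Q. delta (a, fst (Q ! i) * c, snd (Q ! i) * b))"
  by (simp add: R23_def tensor_id_left_def Rmap_delta lin_ext_sum)

lemma R13_Rmap_delta:
  "R13 (Rmap Q) (delta (a, b, c)) = (\<Sum>i<length Q. delta (fst (Q ! i) * c, b, snd (Q ! i) * a))"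
proof -
  have tau_23: "tensor_id_left tau2 (delta (a, b, c)) = delta (a, c, b)" for a b c :: 'a
    by (simp add: tensor_id_left_def tau2_def)
  show ?thesis
    by (simp add: R13_def tau_23 tensor_id_right_def Rmap_delta lin_ext_sum
        free_linear_sum[OF free_linear_tensor_id_left])
qed

lemma yang_baxter_lhs_delta:
  "(R12 (Rmap Q) \<circ> R13 (Rmap Q) \<circ> R23 (Rmap Q)) (delta (a, b, c)) =
    (\<Sum>i<length Q. \<Sum>j<length Q. \<Sum>k<length Q.
      delta (fst (Q ! k) * fst (Q ! i) * c, snd (Q ! k) * fst (Q ! j) * snd (Q ! i) * b,
        snd (Q ! j) * a))"
  by (simp add: R23_Rmap_delta R13_Rmap_delta R12_Rmap_delta mult.assoc
      free_linear_sum[OF free_linear_R13] free_linear_sum[OF free_linear_R12])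

lemma yang_baxter_rhs_delta:
  "(R23 (Rmap Q) \<circ> R13 (Rmap Q) \<circ> R12 (Rmap Q)) (delta (a, b, c)) =
    (\<Sum>k<length Q. \<Sum>i<length Q. \<Sum>j<length Q.
      delta (fst (Q ! i) * c, fst (Q ! j) * snd (Q ! i) * fst (Q ! k) * b,
        snd (Q ! j) * snd (Q ! k) * a))"
  by (simp add: R23_Rmap_delta R13_Rmap_delta R12_Rmap_delta mult.assoc
      free_linear_sum[OF free_linear_R13] free_linear_sum[OF free_linear_R23])

lemma yang_baxter_delta:
  fixes sm :: "'k::comm_ring_1 \<Rightarrow> 'a::ring \<Rightarrow> 'a"
  assumes alg: "k_algebra sm" and cent: "in_centralizer sm Q"
  shows "(R12 (Rmap Q) \<circ> R13 (Rmap Q) \<circ> R23 (Rmap Q)) (delta (a, b, c))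
       - (R23 (Rmap Q) \<circ> R13 (Rmap Q) \<circ> R12 (Rmap Q)) (delta (a, b, c)) \<in> tensor3_rel sm"
proof -
  let ?I = "{..<length Q}"
  let ?x = "\<lambda>i. fst (Q ! i)" and ?y = "\<lambda>i. snd (Q ! i)"
  define T1 T2 T3 :: "nat \<Rightarrow> nat \<Rightarrow> nat \<Rightarrow> 'a \<times> 'a \<times> 'a \<Rightarrow> 'k" where
    "T1 i j k = delta (?x k * ?x i * c, ?y k * ?x j * ?y i * b, ?y j * a)" and
    "T2 i j k = delta (?x k * ?x i * c, ?x j * ?y i * b, ?y j * ?y k * a)" and
    "T3 i j k = delta (?x i * c, ?x j * ?y i * ?x k * b, ?y j * ?y k * a)" for i j k
  have LHS: "(R12 (Rmap Q) \<circ> R13 (Rmap Q) \<circ> R23 (Rmap Q)) (delta (a, b, c))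
      = (\<Sum>i\<in>?I. \<Sum>j\<in>?I. \<Sum>k\<in>?I. T1 i j k)"
    unfolding yang_baxter_lhs_delta T1_def ..
  have RHS: "(R23 (Rmap Q) \<circ> R13 (Rmap Q) \<circ> R12 (Rmap Q)) (delta (a, b, c))
      = (\<Sum>k\<in>?I. \<Sum>i\<in>?I. \<Sum>j\<in>?I. T3 i j k)"
    unfolding yang_baxter_rhs_delta T3_def ..
  have T1_T2: "(\<Sum>j\<in>?I. T1 i j k) - (\<Sum>j\<in>?I. T2 i j k) \<in> tensor3_rel sm" for i k
    using centralizer_into_23[OF cent module_hom_mult_right[OF alg, of "?y i * b"]
        module_hom_mult_right[OF alg, of a], where a = "?x k * ?x i * c" and z = "?y k"]
    by (simp add: T1_def T2_def mult.assoc)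
  have T2_T3: "(\<Sum>i\<in>?I. T2 i j k) - (\<Sum>i\<in>?I. T3 i j k) \<in> tensor3_rel sm" for j k
    using centralizer_into_12[OF cent module_hom_mult_right[OF alg, of c]
        module_hom_compose[OF module_hom_mult_right[OF alg, of b]
          module_hom_mult_left[OF alg, of "?x j"]],
        where c = "?y j * ?y k * a" and z = "?x k"]
    by (simp add: T2_def T3_def mult.assoc comp_def)
  have T1_T2_sum: "(\<Sum>i\<in>?I. \<Sum>k\<in>?I. \<Sum>j\<in>?I. T1 i j k)
      - (\<Sum>i\<in>?I. \<Sum>k\<in>?I. \<Sum>j\<in>?I. T2 i j k) \<in> tensor3_rel sm"
    by (intro tensor3_rel_sum_diff T1_T2)
  have T2_T3_sum: "(\<Sum>k\<in>?I. \<Sum>j\<in>?I. \<Sum>i\<in>?I. T2 i j k)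
      - (\<Sum>k\<in>?I. \<Sum>j\<in>?I. \<Sum>i\<in>?I. T3 i j k) \<in> tensor3_rel sm"
    by (intro tensor3_rel_sum_diff T2_T3)
  have swap_T2: "(\<Sum>i\<in>?I. \<Sum>k\<in>?I. \<Sum>j\<in>?I. T2 i j k)
      = (\<Sum>k\<in>?I. \<Sum>j\<in>?I. \<Sum>i\<in>?I. T2 i j k)"
    by (subst sum.swap) (rule sum.cong[OF refl sum.swap])
  have swap_T1: "(\<Sum>i\<in>?I. \<Sum>j\<in>?I. \<Sum>k\<in>?I. T1 i j k)
      = (\<Sum>i\<in>?I. \<Sum>k\<in>?I. \<Sum>j\<in>?I. T1 i j k)"
    and swap_T3: "(\<Sum>k\<in>?I. \<Sum>i\<in>?I. \<Sum>j\<in>?I. T3 i j k)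
      = (\<Sum>k\<in>?I. \<Sum>j\<in>?I. \<Sum>i\<in>?I. T3 i j k)"
    by (rule sum.cong[OF refl sum.swap])+
  show ?thesis
    unfolding LHS RHS swap_T1 swap_T3
    by (rule tensor3_rel_trans[OF T1_T2_sum[unfolded swap_T2] T2_T3_sum])
qed

theorem corollary25:
  fixes sm :: "'k::comm_ring_1 \<Rightarrow> 'a::ring \<Rightarrow> 'a"
    and Q :: "('a \<times> 'a) list"
  assumes "k_algebra sm"
    and "in_centralizer sm Q"
  shows "\<forall>f :: 'a \<times> 'a \<times> 'a \<Rightarrow> 'k. fsupp f \<longrightarrow>
           (R12 (Rmap Q) \<circ> R13 (Rmap Q) \<circ> R23 (Rmap Q)) f
             - (R23 (Rmap Q) \<circ> R13 (Rmap Q) \<circ> R12 (Rmap Q)) f \<in> tensor3_rel sm"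
proof (intro allI impI)
  fix f :: "'a \<times> 'a \<times> 'a \<Rightarrow> 'k"
  assume "fsupp f"
  show "(R12 (Rmap Q) \<circ> R13 (Rmap Q) \<circ> R23 (Rmap Q)) f
      - (R23 (Rmap Q) \<circ> R13 (Rmap Q) \<circ> R12 (Rmap Q)) f \<in> tensor3_rel sm"
  proof (rule free_linear_diff_in_tensor3_rel[OF _ _ \<open>fsupp f\<close>])
    show "free_linear (R12 (Rmap Q) \<circ> R13 (Rmap Q) \<circ> R23 (Rmap Q))"
      and "free_linear (R23 (Rmap Q) \<circ> R13 (Rmap Q) \<circ> R12 (Rmap Q))"
      by (intro free_linear_comp free_linear_R12 free_linear_R13 free_linear_R23)+
    show "(R12 (Rmap Q) \<circ> R13 (Rmap Q) \<circ> R23 (Rmap Q)) (delta x)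
        - (R23 (Rmap Q) \<circ> R13 (Rmap Q) \<circ> R12 (Rmap Q)) (delta x) \<in> tensor3_rel sm" for x
      using yang_baxter_delta[OF assms] by (cases x) auto
  qed
qed

end
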